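(* Let $G=(V,E)$ be a simple planar bipartite undirected graph whose edges are each colored Red or Blue, and let $M$ be a perfect matching of $G$ containing an odd number of Red edges. Define the weighted directed graph $H$ on vertex set $V$ as follows: $(u,v)$ is an edge of $H$ if and only if there is $x\in V$ with $\{u,x\}\in M$ and $\{x,v\}\in E\setminus M$; its weight $w(u,v)$ is $0$ if $\{u,x\}$ and $\{x,v\}$ have the same color and $1$ otherwise. Then $G$ has a perfect matching containing an even number of Red edges if and only if $H$ contains a directed cycle of odd total weight.
   Context: A perfect matching is a set of pairwise vertex-disjoint edges covering every vertex. The weight of a directed cycle is the sum of the weights of its edges. (Since $M$ is perfect, for each $u$ the vertex $x$ with $\{u,x\}\in M$ is unique.) *)

theory Defs
  imports "HOL-Analysis.Analysis"
begin

datatype color = Red | Blue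

definition simple_graph :: "'a set \<Rightarrow> 'a set set \<Rightarrow> bool" where
  "simple_graph V E \<longleftrightarrow> finite V \<and> (\<forall>e\<in>E. \<exists>u v. e = {u, v} \<and> u \<noteq> v \<and> u \<in> V \<and> v \<in> V)"

definition bipartite :: "'a set \<Rightarrow> 'a set set \<Rightarrow> bool" where
  "bipartite V E \<longleftrightarrow> (\<exists>A B. A \<inter> B = {} \<and> A \<union> B = V \<and>
      (\<forall>e\<in>E. \<exists>a b. a \<in> A \<and> b \<in> B \<and> e = {a, b}))"

definition planar :: "'a set \<Rightarrow> 'a set set \<Rightarrow> bool" where
  "planar V E \<longleftrightarrow> (\<exists>(pos :: 'a \<Rightarrow> complex) (\<gamma> :: 'a set \<Rightarrow> real \<Rightarrow> complex).
      inj_on pos V \<and>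
      (\<forall>e\<in>E. arc (\<gamma> e) \<and> (\<exists>u v. e = {u, v} \<and> pathstart (\<gamma> e) = pos u \<and>
           pathfinish (\<gamma> e) = pos v \<and> path_image (\<gamma> e) \<inter> pos ` V = {pos u, pos v})) \<and>
      (\<forall>e\<in>E. \<forall>e'\<in>E. e \<noteq> e' \<longrightarrow>
           path_image (\<gamma> e) \<inter> path_image (\<gamma> e') \<subseteq> pos ` (e \<inter> e')))"

definition perfect_matching :: "'a set \<Rightarrow> 'a set set \<Rightarrow> 'a set set \<Rightarrow> bool" where
  "perfect_matching V E M \<longleftrightarrow> M \<subseteq> E \<and>
      (\<forall>e\<in>M. \<forall>e'\<in>M. e \<noteq> e' \<longrightarrow> e \<inter> e' = {}) \<and> \<Union>M = V"

definition red_count :: "('a set \<Rightarrow> color) \<Rightarrow> 'a set set \<Rightarrow> nat" where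
  "red_count col M = card {e \<in> M. col e = Red}"

definition H_edge :: "'a set \<Rightarrow> 'a set set \<Rightarrow> 'a set set \<Rightarrow> 'a \<Rightarrow> 'a \<Rightarrow> bool" where
  "H_edge V E M u v \<longleftrightarrow> (\<exists>x\<in>V. {u, x} \<in> M \<and> {x, v} \<in> E - M)"

definition H_weight :: "('a set \<Rightarrow> color) \<Rightarrow> 'a set set \<Rightarrow> 'a \<Rightarrow> 'a \<Rightarrow> nat" where
  "H_weight col M u v = (let x = (THE x. {u, x} \<in> M) in
      if col {u, x} = col {x, v} then 0 else 1)"

definition H_cycle :: "'a set \<Rightarrow> 'a set set \<Rightarrow> 'a set set \<Rightarrow> 'a list \<Rightarrow> bool" where
  "H_cycle V E M cs \<longleftrightarrow> cs \<noteq> [] \<and> distinct cs \<and> set cs \<subseteq> V \<and>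
     (\<forall>i<length cs. H_edge V E M (cs ! i) (cs ! ((i + 1) mod length cs)))"

definition cycle_weight :: "('a set \<Rightarrow> color) \<Rightarrow> 'a set set \<Rightarrow> 'a list \<Rightarrow> nat" where
  "cycle_weight col M cs = (\<Sum>i<length cs. H_weight col M (cs ! i) (cs ! ((i + 1) mod length cs)))"

end

theory Submission
  imports Defs "HOL-Combinatorics.Cycles"
begin

(*
  Fix a bipartition (A, B) and write p and q for the partner maps of M and of another perfect
  matching M'. Then sigma = q o p permutes A, and M' consists of the edges {p u, sigma u} for u in A;
  conversely every permutation sigma of A with all {p u, sigma u} in E yields a perfect matching in
  this way. Reading both matchings along A, their numbers of red edges differ in parity by the
  sum over u in A of the H-weight w(u, sigma u). Fixed points of sigma contribute 0, and for a
  moved point u -> sigma u is an edge of H. So if M' is even, some cycle of sigma has odd weight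
  and is an odd directed cycle of H; conversely an odd cycle of H stays on one side of the
  bipartition, and rotating M along it gives an even perfect matching.
*)

lemma odd_mismatch_count_iff:
  fixes f g :: "'i \<Rightarrow> color"
  assumes "finite I"
  shows "odd (\<Sum>i\<in>I. if f i = g i then 0 else 1 :: nat) \<longleftrightarrow>
         odd (card {i\<in>I. f i = Red} + card {i\<in>I. g i = Red})"
proof -
  have card_eq: "card {i\<in>I. P i} = (\<Sum>i\<in>I. if P i then 1 else 0 :: nat)" for P
    using assms by (simp add: sum.If_cases Int_def)
  have pointwise: "(if f i = g i then 0 else 1 :: nat) + 2 * (if f i = Red \<and> g i = Red then 1 else 0)
      = (if f i = Red then 1 else 0) + (if g i = Red then 1 else 0)" for i
    by (cases "f i"; cases "g i") auto
  have "(\<Sum>i\<in>I. if f i = g i then 0 else 1 :: nat) + 2 * card {i\<in>I. f i = Red \<and> g i = Red}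
      = (\<Sum>i\<in>I. (if f i = g i then 0 else 1) + 2 * (if f i = Red \<and> g i = Red then 1 else 0))"
    (is "?W + 2 * ?K = _") unfolding card_eq by (simp only: sum.distrib sum_distrib_left)
  also have "\<dots> = (\<Sum>i\<in>I. (if f i = Red then 1 else 0) + (if g i = Red then 1 else 0))"
    using pointwise by (rule sum.cong[OF refl])
  also have "\<dots> = card {i\<in>I. f i = Red} + card {i\<in>I. g i = Red}"
    unfolding card_eq by (simp only: sum.distrib)
  finally have "odd (?W + 2 * ?K) \<longleftrightarrow> odd (card {i\<in>I. f i = Red} + card {i\<in>I. g i = Red})"
    by (rule arg_cong)
  then show ?thesis by simp
qed

lemma card_filter_image: "inj_on f A \<Longrightarrow> card {e \<in> f ` A. P e} = card {u \<in> A. P (f u)}"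
proof -
  assume inj: "inj_on f A"
  have "{e \<in> f ` A. P e} = f ` {u \<in> A. P (f u)}" by auto
  moreover have "inj_on f {u \<in> A. P (f u)}" using inj by (rule inj_on_subset) blast
  ultimately show ?thesis by (simp add: card_image)
qed

lemma odd_sum_imp_odd_cycle_sum:
  fixes g :: "'a \<Rightarrow> nat"
  assumes perm: "\<sigma> permutes S" and "finite S" and odd: "odd (sum g S)"
  shows "\<exists>a\<in>S. odd (sum g (set (support \<sigma> a)))"
proof -
  have permutation: "permutation \<sigma>" using perm \<open>finite S\<close> permutation_permutes by blast
  define C where "C = (\<lambda>a. set (support \<sigma> a)) ` S"
  have "set (support \<sigma> a) \<subseteq> S" if "a \<in> S" for a
    using that support_set[OF permutation] permutes_in_image[OF permutes_funpow[OF perm]] by auto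
  moreover have "a \<in> set (support \<sigma> a)" for a
    using least_power_of_permutation(2)[OF permutation] by force
  ultimately have "\<Union>C = S" unfolding C_def by blast
  moreover have "disjoint C"
    using disjoint_support[OF permutation] unfolding C_def by (rule pairwise_subset) auto
  ultimately have "sum g S = sum (sum g) C"
    using sum.Union_disjoint[of C g] unfolding C_def disjoint_def by auto
  with odd have odd_C: "odd (sum (sum g) C)" by simp
  show ?thesis
  proof (rule ccontr)
    assume "\<not> ?thesis"
    then have "even (sum g X)" if "X \<in> C" for X using that unfolding C_def by blast
    then have "even (sum (sum g) C)" by (rule dvd_sum)
    with odd_C show False by simp
  qed
qed

lemma cycle_of_list_nth:
  assumes "distinct cs" "i < length cs"
  shows "cycle_of_list cs (cs ! i) = cs ! (Suc i mod length cs)"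
proof -
  have "map (cycle_of_list cs) cs = rotate1 cs" using cyclic_rotation[OF assms(1), of 1] by simp
  then have "cycle_of_list cs (cs ! i) = rotate1 cs ! i" using assms(2) by (metis nth_map)
  with assms(2) show ?thesis by (simp add: nth_rotate1)
qed

lemma cycle_of_list_fixpoint:
  assumes "distinct cs" "u \<in> set cs" "cycle_of_list cs u = u"
  shows "cs = [u]"
proof -
  obtain i where i: "i < length cs" "u = cs ! i" using assms(2) by (auto simp: in_set_conv_nth)
  then have "cs ! (Suc i mod length cs) = cs ! i" using assms(1,3) cycle_of_list_nth by metis
  moreover have "Suc i mod length cs < length cs" by (rule mod_less_divisor) (use i(1) in linarith)
  ultimately have "Suc i mod length cs = i" using assms(1) i(1) by (simp add: nth_eq_iff_index_eq)
  then have "\<not> Suc i < length cs" by auto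
  then have "Suc i = length cs" using i(1) by simp
  with \<open>Suc i mod length cs = i\<close> have "length cs = 1" by auto
  then show ?thesis using assms(2) by (cases cs) auto
qed

definition partner :: "'a set set \<Rightarrow> 'a \<Rightarrow> 'a" where
  "partner M u = (THE x. {u, x} \<in> M)"

lemma H_weight_eq:
  "H_weight col M u v = (if col {u, partner M u} = col {partner M u, v} then 0 else 1)"
  unfolding H_weight_def partner_def Let_def ..

lemma H_weight_self [simp]: "H_weight col M u u = 0"
  by (simp add: H_weight_eq insert_commute)

lemma simple_graph_edgeE:
  assumes "simple_graph V E" "e \<in> E"
  obtains u v where "e = {u, v}" "u \<noteq> v" "u \<in> V" "v \<in> V"
  using assms unfolding simple_graph_def by blast

lemma simple_graph_doubleton:
  assumes "simple_graph V E" "{u, v} \<in> E"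
  shows "u \<noteq> v" "u \<in> V" "v \<in> V"
  using assms unfolding simple_graph_def by (auto simp: doubleton_eq_iff)

locale matched_graph =
  fixes V :: "'a set" and E M :: "'a set set"
  assumes simple: "simple_graph V E" and perfect: "perfect_matching V E M"
begin

lemma finite_V: "finite V"
  using simple unfolding simple_graph_def by blast

lemma matching_subset: "M \<subseteq> E"
  using perfect unfolding perfect_matching_def by blast

lemma matching_disjoint: "e \<in> M \<Longrightarrow> e' \<in> M \<Longrightarrow> e \<noteq> e' \<Longrightarrow> e \<inter> e' = {}"
  using perfect unfolding perfect_matching_def by blast

lemma matching_covers: "\<Union>M = V"
  using perfect unfolding perfect_matching_def by blast

lemma partner_eq: "{u, x} \<in> M \<Longrightarrow> partner M u = x"
proof -
  have unique: "y = x" if "{u, x} \<in> M" "{u, y} \<in> M" for x y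
  proof -
    have "{u, x} = {u, y}" using that matching_disjoint[of "{u, x}" "{u, y}"] by auto
    moreover have "u \<noteq> x" using that simple_graph_doubleton[OF simple] matching_subset by blast
    ultimately show ?thesis by (auto simp: doubleton_eq_iff)
  qed
  assume "{u, x} \<in> M"
  then show ?thesis unfolding partner_def using unique by (intro the_equality)
qed

lemma partner_mem: "u \<in> V \<Longrightarrow> {u, partner M u} \<in> M"
proof -
  assume "u \<in> V"
  then obtain e where "e \<in> M" "u \<in> e" using matching_covers by blast
  moreover from this obtain a b where "e = {a, b}"
    using matching_subset simple_graph_edgeE[OF simple] by blast
  ultimately obtain x where "{u, x} \<in> M" by (auto simp: insert_commute)
  then show ?thesis using partner_eq by simp
qed

lemma partner_in_V: "u \<in> V \<Longrightarrow> partner M u \<in> V"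
  using partner_mem matching_subset simple_graph_doubleton(3)[OF simple] by blast

lemma partner_partner: "u \<in> V \<Longrightarrow> partner M (partner M u) = u"
  using partner_mem partner_eq by (metis insert_commute)

lemma matching_edge_eq: "e \<in> M \<Longrightarrow> u \<in> e \<Longrightarrow> e = {u, partner M u}"
proof -
  assume e: "e \<in> M" "u \<in> e"
  obtain a b where "e = {a, b}" using e matching_subset simple_graph_edgeE[OF simple] by blast
  with e(2) have "e = {u, b} \<or> e = {u, a}" by (auto simp: insert_commute)
  then show ?thesis using e(1) partner_eq by auto
qed

lemma H_edge_iff: "u \<in> V \<Longrightarrow> H_edge V E M u v \<longleftrightarrow> {partner M u, v} \<in> E \<and> v \<noteq> u"
proof -
  assume u: "u \<in> V"
  have "{partner M u, v} \<in> M \<longleftrightarrow> v = u"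
    using partner_eq[of "partner M u" v] partner_partner[OF u] partner_mem[OF u]
    by (auto simp: insert_commute)
  then show ?thesis
    unfolding H_edge_def using u partner_eq partner_mem partner_in_V by blast
qed

end

lemma H_cycle_iff_cycle_of_list:
  "H_cycle V E M cs \<longleftrightarrow>
     cs \<noteq> [] \<and> distinct cs \<and> set cs \<subseteq> V \<and> (\<forall>u\<in>set cs. H_edge V E M u (cycle_of_list cs u))"
proof -
  have "(\<forall>i<length cs. H_edge V E M (cs ! i) (cs ! ((i + 1) mod length cs)))
      \<longleftrightarrow> (\<forall>u\<in>set cs. H_edge V E M u (cycle_of_list cs u))" if "distinct cs"
    using that by (simp add: all_set_conv_all_nth cycle_of_list_nth)
  then show ?thesis unfolding H_cycle_def by blast
qed

lemma cycle_weight_eq_sum: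
  assumes "distinct cs"
  shows "cycle_weight col M cs = (\<Sum>u\<in>set cs. H_weight col M u (cycle_of_list cs u))"
proof -
  have "(\<Sum>u\<in>set cs. h u) = (\<Sum>i<length cs. h (cs ! i))" for h :: "'a \<Rightarrow> nat"
    using assms by (simp add: sum_list_distinct_conv_sum_set[symmetric] sum_list_sum_nth atLeast0LessThan)
  then show ?thesis
    unfolding cycle_weight_def using assms by (simp add: cycle_of_list_nth)
qed

definition rematch :: "'a set set \<Rightarrow> 'a set \<Rightarrow> ('a \<Rightarrow> 'a) \<Rightarrow> 'a set set" where
  "rematch M A \<sigma> = (\<lambda>u. {partner M u, \<sigma> u}) ` A"

locale bipartite_matched_graph = matched_graph +
  fixes A :: "'a set"
  assumes side_subset: "A \<subseteq> V"
    and edge_crosses: "e \<in> E \<Longrightarrow> \<exists>a b. a \<in> A \<and> b \<in> V - A \<and> e = {a, b}"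
begin

lemma finite_side: "finite A"
  using finite_V side_subset finite_subset by blast

lemma other_side: "bipartite_matched_graph V E M (V - A)"
proof unfold_locales
  fix e assume "e \<in> E"
  then obtain a b where "a \<in> A" "b \<in> V - A" "e = {a, b}" using edge_crosses by blast
  then show "\<exists>a b. a \<in> V - A \<and> b \<in> V - (V - A) \<and> e = {a, b}"
    using side_subset by (auto simp: insert_commute)
qed simp

lemma edge_side: "{x, y} \<in> E \<Longrightarrow> x \<in> A \<longleftrightarrow> y \<notin> A"
  using edge_crosses[of "{x, y}"] by (auto simp: doubleton_eq_iff)

lemma partner_side: "u \<in> V \<Longrightarrow> partner M u \<in> A \<longleftrightarrow> u \<notin> A"
  using edge_side partner_mem matching_subset by blast

lemma H_edge_side: "H_edge V E M u v \<Longrightarrow> u \<in> A \<longleftrightarrow> v \<in> A"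
  unfolding H_edge_def using edge_side matching_subset by blast

lemma rematch_id: "rematch M A id = M"
proof
  show "rematch M A id \<subseteq> M"
  proof
    fix e assume "e \<in> rematch M A id"
    then obtain u where "u \<in> A" "e = {partner M u, u}" unfolding rematch_def by auto
    then show "e \<in> M" using partner_mem side_subset by (auto simp: insert_commute)
  qed
next
  show "M \<subseteq> rematch M A id"
  proof
    fix e assume e: "e \<in> M"
    then obtain a b where ab: "a \<in> A" "b \<in> V - A" "e = {a, b}"
      using edge_crosses matching_subset by blast
    have "partner M b \<in> A" using partner_side ab(2) by blast
    moreover have "e = {partner M (partner M b), id (partner M b)}"
      using matching_edge_eq[OF e, of b] ab partner_partner by (simp add: insert_commute)
    ultimately show "e \<in> rematch M A id" unfolding rematch_def by (rule rev_image_eqI)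
  qed
qed

lemma inj_on_rematch_edge:
  assumes "\<sigma> permutes A"
  shows "inj_on (\<lambda>u. {partner M u, \<sigma> u}) A"
proof
  fix u v assume uv: "u \<in> A" "v \<in> A" "{partner M u, \<sigma> u} = {partner M v, \<sigma> v}"
  have "\<sigma> v \<in> A" using permutes_in_image[OF assms] uv(2) by simp
  moreover have "partner M u \<notin> A" using partner_side side_subset uv(1) by auto
  ultimately have "partner M u \<noteq> \<sigma> v" by auto
  then have "partner M u = partner M v" using uv(3) by (auto simp: doubleton_eq_iff)
  then have "partner M (partner M u) = partner M (partner M v)" by simp
  moreover have "u \<in> V" "v \<in> V" using side_subset uv(1,2) by auto
  ultimately show "u = v" using partner_partner by metis
qed

lemma red_count_rematch:
  assumes "\<sigma> permutes A"
  shows "red_count col (rematch M A \<sigma>) = card {u\<in>A. col {partner M u, \<sigma> u} = Red}"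
  unfolding red_count_def rematch_def
  using card_filter_image[OF inj_on_rematch_edge[OF assms], of "\<lambda>e. col e = Red"] by simp

lemma odd_red_count_rematch_iff:
  assumes "\<sigma> permutes A"
  shows "odd (red_count col M + red_count col (rematch M A \<sigma>)) \<longleftrightarrow>
         odd (\<Sum>u\<in>A. H_weight col M u (\<sigma> u))"
proof -
  have "odd (\<Sum>u\<in>A. H_weight col M u (\<sigma> u)) \<longleftrightarrow>
      odd (card {u\<in>A. col {partner M u, id u} = Red} + card {u\<in>A. col {partner M u, \<sigma> u} = Red})"
    unfolding H_weight_eq
    using odd_mismatch_count_iff[OF finite_side, of "\<lambda>u. col {partner M u, u}" "\<lambda>u. col {partner M u, \<sigma> u}"]
    by (simp add: insert_commute)
  also have "\<dots> \<longleftrightarrow> odd (red_count col (rematch M A id) + red_count col (rematch M A \<sigma>))"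
    using red_count_rematch[OF permutes_id] red_count_rematch[OF assms] by simp
  finally show ?thesis unfolding rematch_id by simp
qed

lemma perfect_matching_rematch:
  assumes perm: "\<sigma> permutes A" and edges: "rematch M A \<sigma> \<subseteq> E"
  shows "perfect_matching V E (rematch M A \<sigma>)"
  unfolding perfect_matching_def
proof (intro conjI ballI impI)
  show "rematch M A \<sigma> \<subseteq> E" by (fact edges)
next
  have sides: "partner M w \<notin> A" "\<sigma> w \<in> A" if "w \<in> A" for w
    using that partner_side side_subset permutes_in_image[OF perm] by auto
  fix e e' assume e: "e \<in> rematch M A \<sigma>" and e': "e' \<in> rematch M A \<sigma>" and "e \<noteq> e'"
  obtain u where u: "u \<in> A" "e = {partner M u, \<sigma> u}" using e unfolding rematch_def by auto
  obtain v where v: "v \<in> A" "e' = {partner M v, \<sigma> v}" using e' unfolding rematch_def by auto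
  have "u \<noteq> v" using u v \<open>e \<noteq> e'\<close> by auto
  moreover have "u \<in> V" "v \<in> V" using u(1) v(1) side_subset by auto
  ultimately have "partner M u \<noteq> partner M v" using partner_partner by metis
  moreover have "\<sigma> u \<noteq> \<sigma> v" using \<open>u \<noteq> v\<close> permutes_inj[OF perm] by (auto dest: injD)
  moreover have "partner M u \<noteq> \<sigma> v" "\<sigma> u \<noteq> partner M v" using sides u(1) v(1) by metis+
  ultimately show "e \<inter> e' = {}" using u(2) v(2) by auto
next
  show "\<Union> (rematch M A \<sigma>) = V"
  proof
    show "\<Union> (rematch M A \<sigma>) \<subseteq> V"
      unfolding rematch_def using partner_in_V side_subset permutes_in_image[OF perm] by auto
  next
    show "V \<subseteq> \<Union> (rematch M A \<sigma>)"
    proof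
      fix v assume v: "v \<in> V"
      show "v \<in> \<Union> (rematch M A \<sigma>)"
      proof (cases "v \<in> A")
        case True
        then have "inv \<sigma> v \<in> A" "v \<in> {partner M (inv \<sigma> v), \<sigma> (inv \<sigma> v)}"
          using permutes_in_image[OF permutes_inv[OF perm]] permutes_inverses(1)[OF perm] by auto
        then show ?thesis unfolding rematch_def by blast
      next
        case False
        then have "partner M v \<in> A" "v \<in> {partner M (partner M v), \<sigma> (partner M v)}"
          using v partner_side partner_partner by auto
        then show ?thesis unfolding rematch_def by blast
      qed
    qed
  qed
qed

lemma partner_comp_permutes:
  assumes "perfect_matching V E M'"
  shows "(\<lambda>u. if u \<in> A then partner M' (partner M u) else u) permutes A" (is "?\<sigma> permutes A")
proof (rule bij_imp_permutes)
  interpret M': bipartite_matched_graph V E M' A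
    by unfold_locales (use simple assms side_subset edge_crosses in auto)
  have across: "partner M u \<in> V - A" "partner M' u \<in> V - A"
    "partner M (partner M' u) \<in> A" "partner M' (partner M u) \<in> A" if "u \<in> A" for u
    using that side_subset partner_side partner_in_V M'.partner_side M'.partner_in_V by auto
  show "bij_betw ?\<sigma> A A"
  proof (rule bij_betw_byWitness[where f' = "\<lambda>v. partner M (partner M' v)"])
    show "\<forall>u\<in>A. partner M (partner M' (?\<sigma> u)) = u" "\<forall>v\<in>A. ?\<sigma> (partner M (partner M' v)) = v"
      using across side_subset by (auto simp: partner_partner M'.partner_partner)
  qed (use across in auto)
qed simp

lemma perfect_matching_is_rematch:
  assumes "perfect_matching V E M'"
  obtains \<sigma> where "\<sigma> permutes A" "M' = rematch M A \<sigma>"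
proof -
  interpret M': bipartite_matched_graph V E M' A
    by unfold_locales (use simple assms side_subset edge_crosses in auto)
  define \<sigma> where "\<sigma> u = (if u \<in> A then partner M' (partner M u) else u)" for u
  have "M' = rematch M A \<sigma>"
  proof
    show "M' \<subseteq> rematch M A \<sigma>"
    proof
      fix e assume e: "e \<in> M'"
      then obtain a b where ab: "a \<in> A" "b \<in> V - A" "e = {a, b}"
        using edge_crosses M'.matching_subset by blast
      then have "e = {b, partner M' b}" using M'.matching_edge_eq[OF e, of b] by simp
      moreover have "partner M b \<in> A" "\<sigma> (partner M b) = partner M' b"
        using ab(2) partner_side partner_partner by (auto simp: \<sigma>_def)
      ultimately show "e \<in> rematch M A \<sigma>"
        unfolding rematch_def using ab(2) partner_partner by (auto intro!: rev_image_eqI)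
    qed
  next
    show "rematch M A \<sigma> \<subseteq> M'"
      unfolding rematch_def \<sigma>_def using side_subset partner_side partner_in_V M'.partner_mem by auto
  qed
  moreover have "\<sigma> permutes A" unfolding \<sigma>_def using assms by (rule partner_comp_permutes)
  ultimately show thesis using that by blast
qed

lemma H_cycle_nth_side:
  assumes cyc: "H_cycle V E M cs" and "i < length cs"
  shows "cs ! i \<in> A \<longleftrightarrow> cs ! 0 \<in> A"
  using assms(2)
proof (induction i)
  case (Suc i)
  have "H_edge V E M (cs ! i) (cs ! ((i + 1) mod length cs))"
    using cyc Suc_lessD[OF Suc.prems] unfolding H_cycle_def by blast
  moreover have "(i + 1) mod length cs = Suc i" using Suc.prems by simp
  ultimately show ?case using Suc H_edge_side by simp
qed simp

lemma H_cycle_one_side: "H_cycle V E M cs \<Longrightarrow> set cs \<subseteq> A \<or> set cs \<subseteq> V - A"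
proof -
  assume cyc: "H_cycle V E M cs"
  then have "set cs \<subseteq> V" unfolding H_cycle_def by blast
  moreover have "\<forall>u\<in>set cs. u \<in> A \<longleftrightarrow> cs ! 0 \<in> A"
    by (simp add: all_set_conv_all_nth H_cycle_nth_side[OF cyc])
  ultimately show ?thesis by (cases "cs ! 0 \<in> A") auto
qed

lemma odd_H_cycle_of_rematch:
  assumes perm: "\<sigma> permutes A" and edges: "rematch M A \<sigma> \<subseteq> E"
    and odd: "odd (\<Sum>u\<in>A. H_weight col M u (\<sigma> u))"
  shows "\<exists>cs. H_cycle V E M cs \<and> odd (cycle_weight col M cs)"
proof -
  obtain a where "a \<in> A" and odd_orbit: "odd (\<Sum>u\<in>set (support \<sigma> a). H_weight col M u (\<sigma> u))"
    using odd_sum_imp_odd_cycle_sum[OF perm finite_side odd] by blast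
  define cs where "cs = support \<sigma> a"
  have permutation: "permutation \<sigma>" using perm finite_side permutation_permutes by blast
  have dist: "distinct cs" unfolding cs_def by (rule cycle_of_permutation[OF permutation])
  have cs_A: "set cs \<subseteq> A" unfolding cs_def
    using \<open>a \<in> A\<close> permutes_in_image[OF permutes_funpow[OF perm]] by auto
  have step: "\<sigma> u = cycle_of_list cs u" if "u \<in> set cs" for u
    using cycle_restrict[OF permutation] that unfolding cs_def by blast
  have weight: "cycle_weight col M cs = (\<Sum>u\<in>set cs. H_weight col M u (\<sigma> u))"
    using cycle_weight_eq_sum[OF dist] step by simp
  have moving: "\<sigma> u \<noteq> u" if "u \<in> set cs" for u
  proof
    assume "\<sigma> u = u"
    then have "cs = [u]" using cycle_of_list_fixpoint[OF dist that] step[OF that] by simp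
    with odd_orbit \<open>\<sigma> u = u\<close> show False unfolding cs_def[symmetric] by simp
  qed
  have "cs \<noteq> []" using odd_orbit unfolding cs_def[symmetric] by auto
  moreover have "H_edge V E M u (cycle_of_list cs u)" if "u \<in> set cs" for u
  proof -
    have "{partner M u, \<sigma> u} \<in> E" using edges cs_A that unfolding rematch_def by blast
    then show ?thesis using H_edge_iff cs_A side_subset that moving step by auto
  qed
  ultimately have "H_cycle V E M cs"
    using dist cs_A side_subset by (auto simp: H_cycle_iff_cycle_of_list)
  with odd_orbit weight show ?thesis unfolding cs_def[symmetric] by auto
qed

lemma odd_H_cycle_of_even_matching:
  assumes "odd (red_count col M)" "perfect_matching V E M'" "even (red_count col M')"
  shows "\<exists>cs. H_cycle V E M cs \<and> odd (cycle_weight col M cs)"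
proof -
  obtain \<sigma> where perm: "\<sigma> permutes A" and M': "M' = rematch M A \<sigma>"
    using perfect_matching_is_rematch[OF assms(2)] .
  have "rematch M A \<sigma> \<subseteq> E" using assms(2) M' unfolding perfect_matching_def by blast
  moreover have "odd (\<Sum>u\<in>A. H_weight col M u (\<sigma> u))"
    using odd_red_count_rematch_iff[OF perm, of col] assms(1,3) M' by simp
  ultimately show ?thesis by (rule odd_H_cycle_of_rematch[OF perm])
qed

lemma even_matching_of_odd_H_cycle:
  assumes odd_M: "odd (red_count col M)" and cyc: "H_cycle V E M cs" and cs_A: "set cs \<subseteq> A"
    and odd_cycle: "odd (cycle_weight col M cs)"
  shows "\<exists>M'. perfect_matching V E M' \<and> even (red_count col M')"
proof -
  let ?\<sigma> = "cycle_of_list cs"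
  have dist: "distinct cs" and edges: "\<forall>u\<in>set cs. H_edge V E M u (?\<sigma> u)"
    using cyc unfolding H_cycle_iff_cycle_of_list by auto
  have perm: "?\<sigma> permutes A" using cycle_permutes cs_A by (rule permutes_subset)
  have "rematch M A ?\<sigma> \<subseteq> E"
  proof
    fix e assume "e \<in> rematch M A ?\<sigma>"
    then obtain u where u: "u \<in> A" "e = {partner M u, ?\<sigma> u}" unfolding rematch_def by auto
    show "e \<in> E"
    proof (cases "u \<in> set cs")
      case True
      then show ?thesis using edges H_edge_iff side_subset u by auto
    next
      case False
      then have "?\<sigma> u = u" by (rule id_outside_supp)
      then show ?thesis using u partner_mem matching_subset side_subset by (auto simp: insert_commute)
    qed
  qed
  moreover have "(\<Sum>u\<in>A. H_weight col M u (?\<sigma> u)) = cycle_weight col M cs"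
  proof -
    have "(\<Sum>u\<in>A. H_weight col M u (?\<sigma> u)) = (\<Sum>u\<in>set cs. H_weight col M u (?\<sigma> u))"
      by (rule sum.mono_neutral_right) (use finite_side cs_A in \<open>auto simp: id_outside_supp\<close>)
    then show ?thesis using cycle_weight_eq_sum[OF dist] by simp
  qed
  ultimately have "perfect_matching V E (rematch M A ?\<sigma>)" "even (red_count col (rematch M A ?\<sigma>))"
    using perfect_matching_rematch[OF perm] odd_red_count_rematch_iff[OF perm, of col] odd_M odd_cycle
    by auto
  then show ?thesis by blast
qed

lemma even_matching_iff_odd_H_cycle:
  assumes "odd (red_count col M)"
  shows "(\<exists>M'. perfect_matching V E M' \<and> even (red_count col M')) \<longleftrightarrow>
         (\<exists>cs. H_cycle V E M cs \<and> odd (cycle_weight col M cs))"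
proof
  assume "\<exists>M'. perfect_matching V E M' \<and> even (red_count col M')"
  then show "\<exists>cs. H_cycle V E M cs \<and> odd (cycle_weight col M cs)"
    using odd_H_cycle_of_even_matching assms by blast
next
  assume "\<exists>cs. H_cycle V E M cs \<and> odd (cycle_weight col M cs)"
  then obtain cs where cs: "H_cycle V E M cs" "odd (cycle_weight col M cs)" by blast
  from H_cycle_one_side[OF cs(1)] show "\<exists>M'. perfect_matching V E M' \<and> even (red_count col M')"
  proof
    assume "set cs \<subseteq> A"
    then show ?thesis using even_matching_of_odd_H_cycle assms cs by blast
  next
    assume "set cs \<subseteq> V - A"
    then show ?thesis
      using bipartite_matched_graph.even_matching_of_odd_H_cycle[OF other_side] assms cs by blast
  qed
qed

end

lemma bipartite_matched_graphE:
  assumes "simple_graph V E" "bipartite V E" "perfect_matching V E M"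
  obtains A where "bipartite_matched_graph V E M A"
proof -
  obtain A B where AB: "A \<inter> B = {}" "A \<union> B = V" "\<forall>e\<in>E. \<exists>a b. a \<in> A \<and> b \<in> B \<and> e = {a, b}"
    using assms(2) unfolding bipartite_def by blast
  have "bipartite_matched_graph V E M A"
  proof unfold_locales
    show "simple_graph V E" "perfect_matching V E M" by (fact assms(1), fact assms(3))
    show "A \<subseteq> V" using AB(2) by blast
    fix e assume "e \<in> E"
    then obtain a b where "a \<in> A" "b \<in> B" "e = {a, b}" using AB(3) by blast
    moreover have "b \<in> V - A" using \<open>b \<in> B\<close> AB(1,2) by blast
    ultimately show "\<exists>a b. a \<in> A \<and> b \<in> V - A \<and> e = {a, b}" by blast
  qed
  then show thesis by (rule that)
qed

theorem mainTheorem13: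
  fixes V :: "'a set" and E :: "'a set set" and col :: "'a set \<Rightarrow> color" and M :: "'a set set"
  assumes "simple_graph V E" and "planar V E" and "bipartite V E"
    and "perfect_matching V E M" and "odd (red_count col M)"
  shows "(\<exists>M'. perfect_matching V E M' \<and> even (red_count col M')) \<longleftrightarrow>
         (\<exists>cs. H_cycle V E M cs \<and> odd (cycle_weight col M cs))"
proof -
  obtain A where "bipartite_matched_graph V E M A"
    using bipartite_matched_graphE[OF assms(1,3,4)] .
  then show ?thesis using assms(5) by (rule bipartite_matched_graph.even_matching_iff_odd_H_cycle)
qed

end
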